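(* Let $a,b,c,d\in\mathbb C$ with $a\notin\mathbb Z$ and $d\notin\{0,-1,-2,\dots\}$. Then, as an identity of formal power series in $x,y$, $$F(a,b;d;x)\,{}_1F_1(c;1-a;y)=\mathrm H_2(a,b,c;d;x,-y)+\sum_{k=1}^\infty\sum_{l=1}^k\frac{(-1)^{k-l}(k-1)!}{(l-1)!\,l!\,(k-l)!}\,\frac{(b)_l(c)_k}{(1-a)_k(1-a)_{k-l}(d)_l}\,x^ly^k\,\mathrm H_2(a-k+l,b+l,c+k;d+l;x,-y).$$
   Context: Pochhammer symbol: $(\lambda)_k=\Gamma(\lambda+k)/\Gamma(\lambda)$ for every integer $k$ (possibly negative) whenever defined; $(\lambda)_0=1$. $F(a,b;c;x)=\sum_{k\ge0}\frac{(a)_k(b)_k}{(c)_k k!}x^k$, ${}_1F_1(a;c;x)=\sum_{k\ge0}\frac{(a)_k}{(c)_k k!}x^k$. Confluent Horn function $\mathrm H_2(a,b,c;d;x,y)=\sum_{p,q\ge0}\frac{(a)_{p-q}(b)_p(c)_q}{(d)_p\,p!\,q!}x^py^q$. All functions are regarded as formal power series in $x,y$; the infinite double sum converges in the formal (degree) topology. *)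

theory Defs
  imports Complex_Main
begin

text \<open>Bivariate formal power series in x, y over the complex numbers are represented
  by their coefficient functions: f p q is the coefficient of x^p y^q.\<close>

type_synonym bfps = "nat \<Rightarrow> nat \<Rightarrow> complex"

definition bmult :: "bfps \<Rightarrow> bfps \<Rightarrow> bfps" where
  "bmult f g = (\<lambda>p q. \<Sum>i\<le>p. \<Sum>j\<le>q. f i j * g (p - i) (q - j))"

definition bshift :: "nat \<Rightarrow> nat \<Rightarrow> bfps \<Rightarrow> bfps" where
  "bshift l k f = (\<lambda>p q. if l \<le> p \<and> k \<le> q then f (p - l) (q - k) else 0)"

text \<open>Pochhammer symbol with integer index: (lambda)_k = Gamma(lambda+k)/Gamma(lambda);
  for negative k = -m this is 1/((lambda - m)_m).\<close>
definition poch_int :: "complex \<Rightarrow> int \<Rightarrow> complex" where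
  "poch_int a k = (if 0 \<le> k then pochhammer a (nat k)
                   else inverse (pochhammer (a + of_int k) (nat (- k))))"

definition hyp2F1 :: "complex \<Rightarrow> complex \<Rightarrow> complex \<Rightarrow> bfps" where
  "hyp2F1 a b c = (\<lambda>p q. if q = 0 then
       pochhammer a p * pochhammer b p / (pochhammer c p * fact p) else 0)"

definition hyp1F1y :: "complex \<Rightarrow> complex \<Rightarrow> bfps" where
  "hyp1F1y a c = (\<lambda>p q. if p = 0 then
       pochhammer a q / (pochhammer c q * fact q) else 0)"

text \<open>Confluent Horn function H2(a,b,c;d;x,-y) (note the sign of the second variable).\<close>
definition H2neg :: "complex \<Rightarrow> complex \<Rightarrow> complex \<Rightarrow> complex \<Rightarrow> bfps" where
  "H2neg a b c d = (\<lambda>p q.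
       poch_int a (int p - int q) * pochhammer b p * pochhammer c q
       / (pochhammer d p * fact p * fact q) * (-1) ^ q)"

end

theory Submission
  imports Defs "HOL-Analysis.Gamma_Function"
begin

text \<open>Write every Pochhammer symbol in \<open>a\<close> through \<open>\<rho>(n) = 1/\<Gamma>(a + n) = rGamma_shift a n\<close>, \<open>n \<in> \<int>\<close>, which never
  vanishes since \<open>a \<notin> \<int>\<close>; e.g. \<open>1/(1 - a)\<^sub>k = (-1)\<^sup>k \<rho>(0)/\<rho>(-k)\<close>. At the coefficient of
  \<open>x\<^sup>p y\<^sup>q\<close>, the \<open>l\<close>-th summand of the \<open>k\<close>-th correction term then becomes a common factor (\<open>coeff_factor\<close>) times
  \<open>C(p,l) C(k-1,l-1) \<Gamma>(a-k)/(q-k)!\<close>, so by Vandermonde the whole \<open>k\<close>-th term is the factor times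
  \<open>C(p+k-1,k) \<Gamma>(a-k)/(q-k)!\<close>, and it vanishes for \<open>k > q\<close>. The same expression at \<open>k = 0\<close> is the
  coefficient of \<open>H\<^sub>2(a,b,c;d;x,-y)\<close>, and by Chu--Vandermonde its sum over \<open>0 \<le> k \<le> q\<close> is the
  coefficient of the product \<open>F(a,b;d;x) \<^sub>1F\<^sub>1(c;1-a;y)\<close>.\<close>

definition rGamma_shift :: "complex \<Rightarrow> int \<Rightarrow> complex" where
  "rGamma_shift a n = rGamma (a + of_int n)"

lemma rGamma_shift_nonzero:
  assumes "a \<notin> \<int>"
  shows "rGamma_shift a n \<noteq> 0"
proof
  assume "rGamma_shift a n = 0"
  then have "a + of_int n \<in> \<int>"
    unfolding rGamma_shift_def rGamma_eq_zero_iff using nonpos_Ints_subset_Ints by blast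
  then have "a + of_int n - of_int n \<in> \<int>" by (intro Ints_diff) auto
  with assms show False by simp
qed

lemma pochhammer_eq_rGamma_shift:
  assumes "a \<notin> \<int>"
  shows "pochhammer (a + of_int m) k = rGamma_shift a m / rGamma_shift a (m + int k)"
  using pochhammer_rGamma[of "a + of_int m" k] rGamma_shift_nonzero[OF assms, of "m + int k"]
  by (simp add: rGamma_shift_def add.assoc)

lemma poch_int_eq_rGamma_shift:
  assumes "a \<notin> \<int>"
  shows "poch_int (a + of_int m) k = rGamma_shift a m / rGamma_shift a (m + k)"
proof (cases "0 \<le> k")
  case True
  then show ?thesis using pochhammer_eq_rGamma_shift[OF assms, of m "nat k"] by (simp add: poch_int_def)
next
  case False
  then have "pochhammer (a + of_int (m + k)) (nat (- k)) = rGamma_shift a (m + k) / rGamma_shift a m"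
    using pochhammer_eq_rGamma_shift[OF assms, of "m + k" "nat (- k)"] by simp
  then show ?thesis using False rGamma_shift_nonzero[OF assms] by (simp add: poch_int_def add.assoc)
qed

lemma inverse_pochhammer_one_minus:
  assumes "a \<notin> \<int>"
  shows "inverse (pochhammer (1 - a) k) = (-1) ^ k * rGamma_shift a 0 / rGamma_shift a (- int k)"
proof -
  have "pochhammer (1 - a) k = (-1) ^ k * pochhammer (a + of_int (- int k)) k"
    using pochhammer_minus[of "a - 1" k] by (simp add: algebra_simps)
  also have "\<dots> = (-1) ^ k * (rGamma_shift a (- int k) / rGamma_shift a 0)"
    using pochhammer_eq_rGamma_shift[OF assms, of "- int k" k] by simp
  finally have "inverse (pochhammer (1 - a) k)
      = inverse ((-1) ^ k) * inverse (rGamma_shift a (- int k) / rGamma_shift a 0)"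
    by (simp only: inverse_mult_distrib)
  then show ?thesis by (simp flip: power_inverse)
qed

lemma of_nat_choose_eq_pochhammer:
  "(of_nat ((p + k - 1) choose k) :: 'a :: field_char_0) = pochhammer (of_nat p) k / fact k"
proof (cases "k = 0")
  case False
  then have "of_nat (p + k - 1) - of_nat k + 1 = (of_nat p :: 'a)" by auto
  then show ?thesis by (simp add: binomial_gbinomial gbinomial_pochhammer')
qed simp

lemma vandermonde_shifted:
  assumes "1 \<le> k"
  shows "(\<Sum>l=1..k. (p choose l) * ((k - 1) choose (l - 1))) = (p + k - 1) choose k"
proof -
  have "(p + k - 1) choose k = (\<Sum>l\<le>k. (p choose l) * ((k - 1) choose (k - l)))"
    using vandermonde[of p "k - 1" k] assms by simp
  also have "\<dots> = (\<Sum>l=1..k. (p choose l) * ((k - 1) choose (k - l)))"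
    using assms by (simp add: atMost_atLeast0 sum.atLeast_Suc_atMost)
  also have "\<dots> = (\<Sum>l=1..k. (p choose l) * ((k - 1) choose (l - 1)))"
  proof (rule sum.cong[OF refl])
    fix l assume "l \<in> {1..k}"
    then have "l - 1 \<le> k - 1" "(k - 1) - (l - 1) = k - l"
      by auto
    then have "(k - 1) choose (l - 1) = (k - 1) choose (k - l)"
      using binomial_symmetric[of "l - 1" "k - 1"] by simp
    then show "(p choose l) * ((k - 1) choose (k - l)) = (p choose l) * ((k - 1) choose (l - 1))"
      by simp
  qed
  finally show ?thesis by simp
qed

text \<open>Chu--Vandermonde for \<open>(p + (a - q))\<^sub>q\<close>, in terms of \<open>\<Gamma>(a - k) = 1 / rGamma_shift a (- k)\<close>.\<close>
lemma sum_choose_div_rGamma_shift: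
  assumes "a \<notin> \<int>"
  shows "(\<Sum>k\<le>q. of_nat ((p + k - 1) choose k) / (rGamma_shift a (- int k) * fact (q - k)))
       = rGamma_shift a (int p - int q) / (rGamma_shift a (int p) * rGamma_shift a (- int q) * fact q)"
proof -
  have nz: "rGamma_shift a n \<noteq> 0" for n using rGamma_shift_nonzero[OF assms] .
  have summand: "of_nat ((p + k - 1) choose k) / (rGamma_shift a (- int k) * fact (q - k))
      = of_nat (q choose k) * pochhammer (of_nat p) k * pochhammer (a - of_nat q) (q - k)
        / (rGamma_shift a (- int q) * fact q)"
    if "k \<le> q" for k
  proof -
    have "pochhammer (a - of_nat q) (q - k) = rGamma_shift a (- int q) / rGamma_shift a (- int k)"
      using pochhammer_eq_rGamma_shift[OF assms, of "- int q" "q - k"] that by simp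
    moreover have "(of_nat (q choose k) :: complex) = fact q / (fact k * fact (q - k))"
      by (rule binomial_fact[OF that])
    ultimately show ?thesis
      unfolding of_nat_choose_eq_pochhammer using nz by (simp add: field_simps)
  qed
  have "(\<Sum>k\<le>q. of_nat ((p + k - 1) choose k) / (rGamma_shift a (- int k) * fact (q - k)))
      = (\<Sum>k\<le>q. of_nat (q choose k) * pochhammer (of_nat p) k * pochhammer (a - of_nat q) (q - k))
        / (rGamma_shift a (- int q) * fact q)"
    unfolding sum_divide_distrib by (rule sum.cong[OF refl summand]) simp
  also have "(\<Sum>k\<le>q. of_nat (q choose k) * pochhammer (of_nat p) k * pochhammer (a - of_nat q) (q - k))
      = pochhammer (a + of_int (int p - int q)) q"
    using pochhammer_binomial_sum[of "of_nat p" "a - of_nat q" q] by (simp add: algebra_simps)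
  also have "\<dots> = rGamma_shift a (int p - int q) / rGamma_shift a (int p)"
    by (subst pochhammer_eq_rGamma_shift[OF assms]) simp
  finally show ?thesis using nz by (simp add: field_simps)
qed

lemma bmult_hyp2F1_hyp1F1y:
  "bmult (hyp2F1 a b d) (hyp1F1y c e) p q = hyp2F1 a b d p 0 * hyp1F1y c e 0 q"
proof -
  have "(\<Sum>j\<le>q. hyp2F1 a b d i j * hyp1F1y c e (p - i) (q - j)) = hyp2F1 a b d i 0 * hyp1F1y c e (p - i) q"
    for i by (subst sum.atMost_shift) (simp add: hyp2F1_def)
  then have "bmult (hyp2F1 a b d) (hyp1F1y c e) p q = (\<Sum>i\<le>p. hyp2F1 a b d i 0 * hyp1F1y c e (p - i) q)"
    by (simp add: bmult_def)
  also have "\<dots> = (\<Sum>i\<le>p. if i = p then hyp2F1 a b d p 0 * hyp1F1y c e 0 q else 0)"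
    by (rule sum.cong) (auto simp: hyp1F1y_def)
  also have "\<dots> = hyp2F1 a b d p 0 * hyp1F1y c e 0 q"
    by simp
  finally show ?thesis .
qed

definition coeff_factor :: "complex \<Rightarrow> complex \<Rightarrow> complex \<Rightarrow> complex \<Rightarrow> nat \<Rightarrow> nat \<Rightarrow> complex" where
  "coeff_factor a b c d p q = (-1) ^ q * pochhammer b p * pochhammer c q * rGamma_shift a 0 ^ 2
     / (pochhammer d p * rGamma_shift a (int p - int q) * fact p)"

definition correction_summand :: "complex \<Rightarrow> complex \<Rightarrow> complex \<Rightarrow> complex \<Rightarrow> nat \<Rightarrow> nat \<Rightarrow> bfps" where
  "correction_summand a b c d k l = (\<lambda>p q.
      ((-1) ^ (k - l) * fact (k - 1) / (fact (l - 1) * fact l * fact (k - l)))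
      * (pochhammer b l * pochhammer c k
         / (pochhammer (1 - a) k * pochhammer (1 - a) (k - l) * pochhammer d l))
      * bshift l k (H2neg (a - of_nat k + of_nat l) (b + of_nat l) (c + of_nat k) (d + of_nat l)) p q)"

definition correction_term :: "complex \<Rightarrow> complex \<Rightarrow> complex \<Rightarrow> complex \<Rightarrow> nat \<Rightarrow> bfps" where
  "correction_term a b c d k = (\<lambda>p q. \<Sum>l=1..k. correction_summand a b c d k l p q)"

lemma bmult_hyp2F1_hyp1F1y_eq_coeff_factor:
  assumes "a \<notin> \<int>" and "\<forall>n::nat. d \<noteq> - of_nat n"
  shows "bmult (hyp2F1 a b d) (hyp1F1y c (1 - a)) p q
       = coeff_factor a b c d p q * rGamma_shift a (int p - int q)
           / (rGamma_shift a (int p) * rGamma_shift a (- int q) * fact q)"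
proof -
  have "bmult (hyp2F1 a b d) (hyp1F1y c (1 - a)) p q
      = pochhammer a p * pochhammer b p / (pochhammer d p * fact p)
        * (pochhammer c q * inverse (pochhammer (1 - a) q) / fact q)"
    unfolding bmult_hyp2F1_hyp1F1y by (simp add: hyp2F1_def hyp1F1y_def divide_inverse)
  also have "\<dots> = coeff_factor a b c d p q * rGamma_shift a (int p - int q)
           / (rGamma_shift a (int p) * rGamma_shift a (- int q) * fact q)"
  proof -
    have "pochhammer d p \<noteq> 0"
      using assms(2) by (auto simp: pochhammer_eq_0_iff)
    moreover have "pochhammer a p = rGamma_shift a 0 / rGamma_shift a (int p)"
      using pochhammer_eq_rGamma_shift[OF assms(1), of 0 p] by simp
    ultimately show ?thesis
      unfolding coeff_factor_def inverse_pochhammer_one_minus[OF assms(1)]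
      using rGamma_shift_nonzero[OF assms(1)] by (simp add: field_simps power2_eq_square)
  qed
  finally show ?thesis .
qed

lemma H2neg_eq_coeff_factor:
  assumes "a \<notin> \<int>" and "\<forall>n::nat. d \<noteq> - of_nat n"
  shows "H2neg a b c d p q = coeff_factor a b c d p q / (rGamma_shift a 0 * fact q)"
proof -
  have "pochhammer d p \<noteq> 0"
    using assms(2) by (auto simp: pochhammer_eq_0_iff)
  moreover have "poch_int a (int p - int q) = rGamma_shift a 0 / rGamma_shift a (int p - int q)"
    using poch_int_eq_rGamma_shift[OF assms(1), of 0] by simp
  ultimately show ?thesis
    using rGamma_shift_nonzero[OF assms(1)]
    by (simp add: H2neg_def coeff_factor_def field_simps power2_eq_square)
qed

lemma correction_summand_eq_coeff_factor:
  fixes a b c d :: complex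
  assumes a: "a \<notin> \<int>" and d: "\<forall>n::nat. d \<noteq> - of_nat n"
    and "1 \<le> l" "l \<le> k" "k \<le> q"
  shows "correction_summand a b c d k l p q
       = coeff_factor a b c d p q * of_nat (p choose l) * of_nat ((k - 1) choose (l - 1))
           / (rGamma_shift a (- int k) * fact (q - k))" (is "?lhs = ?rhs")
proof (cases "l \<le> p")
  case False
  then show ?thesis by (simp add: correction_summand_def bshift_def)
next
  case True
  then obtain i where i: "p = l + i" using le_Suc_ex by blast
  obtain j where j: "k = l + j" using \<open>l \<le> k\<close> le_Suc_ex by blast
  obtain m where m: "q = k + m" using \<open>k \<le> q\<close> le_Suc_ex by blast
  have diffs: "k - l = j" "p - l = i" "q - k = m" using i j m by auto
  have poch_a: "poch_int (a - of_nat k + of_nat l) (int i - int m)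
      = rGamma_shift a (- int j) / rGamma_shift a (int p - int q)"
    using poch_int_eq_rGamma_shift[OF a, of "- int j" "int i - int m"] i j m by (simp add: algebra_simps)
  have "?lhs = (-1) ^ j * fact (k - 1) / (fact (l - 1) * fact l * fact j)
      * (pochhammer b l * pochhammer c k * inverse (pochhammer (1 - a) k) * inverse (pochhammer (1 - a) j)
         / pochhammer d l)
      * (rGamma_shift a (- int j) / rGamma_shift a (int p - int q) * pochhammer (b + of_nat l) i
         * pochhammer (c + of_nat k) m / (pochhammer (d + of_nat l) i * fact i * fact m) * (-1) ^ m)"
    unfolding correction_summand_def bshift_def H2neg_def diffs poch_a using True \<open>k \<le> q\<close> by (simp add: field_simps)
  also have "\<dots> = ?rhs"
  proof -
    have b_split: "pochhammer b p = pochhammer b l * pochhammer (b + of_nat l) i"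
      using pochhammer_product'[of b l i] i by simp
    have c_split: "pochhammer c q = pochhammer c k * pochhammer (c + of_nat k) m"
      using pochhammer_product'[of c k m] m by simp
    have d_split: "pochhammer d p = pochhammer d l * pochhammer (d + of_nat l) i"
      using pochhammer_product'[of d l i] i by simp
    have choose_p: "(of_nat (p choose l) :: complex) = fact p / (fact l * fact i)"
      using binomial_fact[OF True] diffs by simp
    have choose_k: "(of_nat ((k - 1) choose (l - 1)) :: complex) = fact (k - 1) / (fact (l - 1) * fact j)"
      using binomial_fact[of "l - 1" "k - 1", where 'a=complex] \<open>1 \<le> l\<close> \<open>l \<le> k\<close> diffs by simp
    have sign: "(-1::complex) ^ q = (-1) ^ k * (-1) ^ m"
      using m by (simp add: power_add)
    have "pochhammer d n \<noteq> 0" for n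
      using d by (auto simp: pochhammer_eq_0_iff)
    then show ?thesis
      unfolding coeff_factor_def b_split c_split d_split choose_p choose_k sign
        inverse_pochhammer_one_minus[OF a] diffs
      using rGamma_shift_nonzero[OF a] by (simp add: field_simps power2_eq_square)
  qed
  finally show ?thesis .
qed

lemma correction_term_eq_coeff_factor:
  assumes "a \<notin> \<int>" and "\<forall>n::nat. d \<noteq> - of_nat n" and "1 \<le> k" "k \<le> q"
  shows "correction_term a b c d k p q
       = coeff_factor a b c d p q * of_nat ((p + k - 1) choose k) / (rGamma_shift a (- int k) * fact (q - k))"
proof -
  have "correction_term a b c d k p q
      = (\<Sum>l=1..k. coeff_factor a b c d p q * of_nat (p choose l) * of_nat ((k - 1) choose (l - 1))
                   / (rGamma_shift a (- int k) * fact (q - k)))"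
    unfolding correction_term_def using assms by (intro sum.cong refl correction_summand_eq_coeff_factor) auto
  also have "\<dots> = coeff_factor a b c d p q * of_nat (\<Sum>l=1..k. (p choose l) * ((k - 1) choose (l - 1)))
                   / (rGamma_shift a (- int k) * fact (q - k))"
    by (simp add: sum_distrib_left sum_divide_distrib mult.assoc)
  also have "\<dots> = coeff_factor a b c d p q * of_nat ((p + k - 1) choose k)
                   / (rGamma_shift a (- int k) * fact (q - k))"
    by (simp only: vandermonde_shifted[OF \<open>1 \<le> k\<close>])
  finally show ?thesis .
qed

lemma correction_term_vanishes:
  assumes "k \<notin> {1..q}"
  shows "correction_term a b c d k p q = 0"
  using assms by (auto simp: correction_term_def correction_summand_def bshift_def)

lemma correction_term_sums:
  assumes "a \<notin> \<int>" and "\<forall>n::nat. d \<noteq> - of_nat n"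
  shows "(\<lambda>k. correction_term a b c d k p q)
           sums (bmult (hyp2F1 a b d) (hyp1F1y c (1 - a)) p q - H2neg a b c d p q)"
proof -
  define s where "s k = of_nat ((p + k - 1) choose k) / (rGamma_shift a (- int k) * fact (q - k))" for k
  have "(\<lambda>k. correction_term a b c d k p q) sums (\<Sum>k\<in>{1..q}. correction_term a b c d k p q)"
    by (rule sums_finite) (auto intro: correction_term_vanishes)
  also have "(\<Sum>k\<in>{1..q}. correction_term a b c d k p q) = coeff_factor a b c d p q * (\<Sum>k\<in>{1..q}. s k)"
    using correction_term_eq_coeff_factor[OF assms] by (simp add: s_def sum_distrib_left)
  also have "(\<Sum>k\<in>{1..q}. s k) = (\<Sum>k\<le>q. s k) - s 0"
    by (simp add: atMost_atLeast0 sum.atLeast_Suc_atMost)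
  also have "coeff_factor a b c d p q * \<dots> = bmult (hyp2F1 a b d) (hyp1F1y c (1 - a)) p q - H2neg a b c d p q"
    unfolding bmult_hyp2F1_hyp1F1y_eq_coeff_factor[OF assms] H2neg_eq_coeff_factor[OF assms] s_def sum_choose_div_rGamma_shift[OF assms(1)]
    by (simp add: right_diff_distrib)
  finally show ?thesis .
qed

theorem mainTheorem5:
  fixes a b c d :: complex
  assumes "a \<notin> \<int>"
    and "\<forall>n::nat. d \<noteq> - of_nat n"
  shows "\<forall>p q. (\<lambda>k. (\<Sum>l=1..k.
            ((-1) ^ (k - l) * fact (k - 1)
               / (fact (l - 1) * fact l * fact (k - l)))
            * (pochhammer b l * pochhammer c k
               / (pochhammer (1 - a) k * pochhammer (1 - a) (k - l) * pochhammer d l))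
            * bshift l k (H2neg (a - of_nat k + of_nat l) (b + of_nat l) (c + of_nat k) (d + of_nat l)) p q))
         sums (bmult (hyp2F1 a b d) (hyp1F1y c (1 - a)) p q - H2neg a b c d p q)"
  using correction_term_sums[OF assms] by (simp add: correction_term_def correction_summand_def)

end
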